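(* Let $n\ge2$, $m\ge1$, and let $\mathcal{A}_m$ and the coefficients $c_{\mathbf{k}}$ be as follows: $\mathcal{A}_m$ is the set of vectors $\mathbf{k}=(k_1,\dots,k_m)$ of non-negative integers with $\sum_{i=1}^m i k_i=m$, and $c_{\mathbf{k}}=c_{\mathbf{k},0}+\sum_{j=1}^{m-1} j(k_j+1)c_{\mathbf{k},j}$ with $c_{\mathbf{k},0}=c_{(k_1-1,k_2,\dots)}$, $c_{\mathbf{k},j}=c_{(k_1,\dots,k_j+1,k_{j+1}-1,\dots)}$, and boundary conditions $c_{\mathbf{k}}=0$ if all $k_i=0$ or some coordinate is negative, $c_{\mathbf{k}}=1$ if $k_1\ge1$ and all other $k_i=0$. Then $$E\big[(\tau^{(n)})^m\big]=(-1)^{m+1}\frac{2\,m!}{n-1}+\frac{n+1}{n-1}\sum_{\mathbf{k}\in\mathcal{A}_m}c_{\mathbf{k}}\Big(\prod_{\substack{1\le i\le m\\ i\text{ even}}}H_{n,i}^{k_i}\Big)\Big(\prod_{\substack{1\le i\le m\\ i\text{ odd}}}(H_{n,i}-2)^{k_i}\Big).$$ In particular $E[\tau^{(n)}]=\frac{n+1}{n-1}H_{n,1}-\frac{2n}{n-1}$ and $E[(\tau^{(n)})^2]=\frac{n+1}{n-1}\big((H_{n,1}-2)^2+H_{n,2}\big)-\frac{4}{n-1}$.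
   Context: Fix $n\ge 2$. A Yule tree with speciation rate 1 on $n$ tips: start with a single lineage; each lineage independently splits into two at rate 1; the process is stopped just before the $n$-th speciation event, so the tree has $n$ tips and $n-1$ speciation (internal) nodes, numbered $1,\dots,n-1$ chronologically from the root. For $i=1,\dots,n$ let $T_i$ be the length of the time interval during which there are exactly $i$ lineages; the $T_i$ are independent, $T_i\sim\mathrm{Exp}(i)$ (rate $i$), the $k$-th speciation occurs at time $T_1+\dots+T_k$, and at each speciation the splitting lineage is uniformly chosen among current lineages, independently of the $T_i$. Choose an unordered pair of distinct tips uniformly at random and let $\kappa_n\in\{1,\dots,n-1\}$ be the index of the speciation event at which their lineages split; the coalescent time of the pair is $\tau^{(n)}=T_{\kappa_n+1}+\dots+T_n$. $H_{n,r}=\sum_{i=1}^n i^{-r}$. *)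

theory Defs
  imports "HOL-Probability.Probability"
begin

definition Hnr :: "nat \<Rightarrow> nat \<Rightarrow> real" where
  "Hnr n r = (\<Sum>i=1..n. 1 / (real i) ^ r)"

text \<open>A history is a list xs of length n-1;
  xs ! (k-1) \<in> {0..<k} is the lineage (among lineages 0..k-1) that splits at the
  k-th speciation event; the new daughter lineage gets label k.
  split_pmf j is the law of the first j choices (uniform, independent).\<close>
fun split_pmf :: "nat \<Rightarrow> nat list pmf" where
  "split_pmf 0 = return_pmf []"
| "split_pmf (Suc j) =
     bind_pmf (split_pmf j) (\<lambda>xs. map_pmf (\<lambda>s. xs @ [s]) (pmf_of_set {0..<Suc j}))"

text \<open>down xs a d: the lineage carrying tip a after undoing the last d speciation
  events (i.e. when there were length xs + 1 - d lineages).\<close>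
primrec down :: "nat list \<Rightarrow> nat \<Rightarrow> nat \<Rightarrow> nat" where
  "down xs a 0 = a"
| "down xs a (Suc d) =
     (let l = down xs a d; k = length xs - d in if l = k then xs ! (k - 1) else l)"

text \<open>Index of the speciation event at which the lineages of tips a and b split:
  the largest number k of lineages at which both tips still have the same ancestor.\<close>
definition split_index :: "nat \<Rightarrow> nat list \<Rightarrow> nat \<Rightarrow> nat \<Rightarrow> nat" where
  "split_index n xs a b = Max {k \<in> {1..n}. down xs a (n - k) = down xs b (n - k)}"

text \<open>Law of kappa_n: random Yule history plus a uniform unordered pair of tips.\<close>
definition kappa_pmf :: "nat \<Rightarrow> nat pmf" where
  "kappa_pmf n =
     bind_pmf (split_pmf (n - 1)) (\<lambda>xs.
       map_pmf (\<lambda>(a, b). split_index n xs a b) (pmf_of_set {(a, b). a < b \<and> b < n}))"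

text \<open>Joint law of (kappa_n, (T_1,...,T_n)), T_i ~ Exp(i) independent of everything.\<close>
definition yule_space :: "nat \<Rightarrow> (nat \<times> (nat \<Rightarrow> real)) measure" where
  "yule_space n = measure_pmf (kappa_pmf n) \<Otimes>\<^sub>M
     (\<Pi>\<^sub>M i\<in>{1..n}. density lborel (exponential_density (real i)))"

definition tau_moment :: "nat \<Rightarrow> nat \<Rightarrow> real" where
  "tau_moment n m = (\<integral>\<omega>. (\<Sum>i\<in>{fst \<omega> <..n}. snd \<omega> i) ^ m \<partial>yule_space n)"

text \<open>The coefficients c_k; vectors k are functions on indices 1,2,... (zero beyond m).
  The first argument is the weight sum_i i k_i of k (it serves as recursion fuel);
  the sum over j runs from 1 to (weight - 1).\<close>
fun ccoef :: "nat \<Rightarrow> (nat \<Rightarrow> int) \<Rightarrow> int" where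
  "ccoef 0 k = 0"
| "ccoef (Suc w) k =
     (if (\<forall>i\<ge>1. k i = 0) \<or> (\<exists>i\<ge>1. k i < 0) then 0
      else if k 1 \<ge> 1 \<and> (\<forall>i\<ge>2. k i = 0) then 1
      else ccoef w (k(1 := k 1 - 1))
         + (\<Sum>j=1..w. int j * (k j + 1) * ccoef w (k(j := k j + 1, Suc j := k (Suc j) - 1))))"

definition Avec :: "nat \<Rightarrow> (nat \<Rightarrow> int) set" where
  "Avec m = {k. (\<forall>i. (i = 0 \<or> i > m) \<longrightarrow> k i = 0) \<and> (\<forall>i. k i \<ge> 0)
               \<and> (\<Sum>i=1..m. int i * k i) = int m}"

end

theory Submission
  imports Defs "HOL-Computational_Algebra.Formal_Power_Series"
begin

text \<open>Given \<kappa>_n = k, the coalescent time is a sum of independent Exp(i) variables, i = k+1..n,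
  whose m-th moment is m! times the coefficient of x^m in \<Prod>_{i>k} 1/(1 - x/i). Counting
  Yule histories gives P(\<kappa>_n = k) = 2(n+1)/((n-1)(k+1)(k+2)), and with these weights the mixture
  of the products telescopes to ((n+1) G_n - 2/(1+x))/(n-1), where
  G_n = (1-x)/(1+x) \<Prod>_{j\<le>n} 1/(1 - x/j). The logarithmic derivative of G_n has coefficients
  H_{n,i} - 2[i odd], so the coefficients of G_n are exponential sums over A_m whose weights
  m!/\<Prod>_i i^(k_i) k_i! are exactly the c_k.\<close>

definition geometric_fps :: "'a::field \<Rightarrow> 'a fps" where
  "geometric_fps c = Abs_fps (\<lambda>k. c ^ k)"

lemma geometric_fps_times_one_minus: "geometric_fps c * (1 - fps_const c * fps_X) = 1"
proof (rule fps_ext)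
  fix k
  have "geometric_fps c * (1 - fps_const c * fps_X) = geometric_fps c - fps_const c * (fps_X * geometric_fps c)"
    by (simp add: algebra_simps)
  then show "fps_nth (geometric_fps c * (1 - fps_const c * fps_X)) k = fps_nth 1 k"
    by (cases k) (simp_all add: geometric_fps_def)
qed

lemma fps_deriv_geometric_fps:
  "fps_deriv (geometric_fps c) = fps_const c * geometric_fps c * geometric_fps c"
proof (rule fps_ext)
  fix k
  have "fps_nth (geometric_fps c * geometric_fps c) k = of_nat (Suc k) * c ^ k"
    by (simp add: fps_mult_nth geometric_fps_def power_add[symmetric])
  then show "fps_nth (fps_deriv (geometric_fps c)) k = fps_nth (fps_const c * geometric_fps c * geometric_fps c) k"
    by (simp only: mult.assoc fps_mult_left_const_nth) (simp add: geometric_fps_def mult_ac)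
qed

lemma fps_nth_mult_nonneg:
  fixes f g :: "'a::linordered_semidom fps"
  assumes "\<And>k. 0 \<le> fps_nth f k" "\<And>k. 0 \<le> fps_nth g k"
  shows "0 \<le> fps_nth (f * g) k"
  using assms by (auto simp: fps_mult_nth intro!: sum_nonneg)

lemma fps_nth_prod_nonneg:
  fixes f :: "'b \<Rightarrow> 'a::linordered_semidom fps"
  assumes "\<And>i k. i \<in> S \<Longrightarrow> 0 \<le> fps_nth (f i) k"
  shows "0 \<le> fps_nth (\<Prod>i\<in>S. f i) k"
  using assms
proof (induction S arbitrary: k rule: infinite_finite_induct)
  case (insert x F)
  then show ?case by (simp add: fps_nth_mult_nonneg)
qed auto

lemma fps_deriv_mult_of_logarithmic:
  fixes F G A B :: "'a::comm_ring_1 fps"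
  assumes "fps_deriv F = A * F" and "fps_deriv G = B * G"
  shows "fps_deriv (F * G) = (A + B) * (F * G)"
  using assms by (simp add: algebra_simps)

lemma fps_deriv_prod_of_logarithmic:
  fixes F A :: "'b \<Rightarrow> 'a::comm_ring_1 fps"
  assumes "\<And>j. j \<in> S \<Longrightarrow> fps_deriv (F j) = A j * F j"
  shows "fps_deriv (\<Prod>j\<in>S. F j) = (\<Sum>j\<in>S. A j) * (\<Prod>j\<in>S. F j)"
  using assms
proof (induction S rule: infinite_finite_induct)
  case (insert x S)
  then show ?case
    by (simp add: algebra_simps)
qed auto

lemma fps_nth_of_deriv_eq_mult:
  fixes F A :: "'a::comm_semiring_1 fps"
  assumes "fps_deriv F = A * F" and "1 \<le> m"
  shows "of_nat m * fps_nth F m = (\<Sum>i=1..m. fps_nth A (i - 1) * fps_nth F (m - i))"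
proof -
  obtain p where m: "m = Suc p"
    using assms(2) by (cases m) auto
  have "of_nat m * fps_nth F m = fps_nth (fps_deriv F) p"
    by (simp add: m)
  also have "\<dots> = fps_nth (A * F) p"
    by (simp add: assms(1))
  also have "\<dots> = (\<Sum>i=0..p. fps_nth A i * fps_nth F (Suc p - Suc i))"
    by (simp add: fps_mult_nth)
  also have "\<dots> = (\<Sum>i=1..m. fps_nth A (i - 1) * fps_nth F (m - i))"
    unfolding m One_nat_def sum.shift_bounds_cl_Suc_ivl by simp
  finally show ?thesis .
qed

section \<open>Moments of sums of independent exponential variables\<close>

lemma nn_integral_exponential_power:
  assumes "0 < l"
  shows "(\<integral>\<^sup>+y. ennreal (y ^ k) \<partial>density lborel (exponential_density l)) = ennreal (fact k / l ^ k)"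
proof -
  have "(\<integral>\<^sup>+y. ennreal (y ^ k) \<partial>density lborel (exponential_density l))
      = (\<integral>\<^sup>+y. ennreal (erlang_density 0 l y * y ^ k) \<partial>lborel)"
    using assms by (subst nn_integral_density)
      (auto intro!: nn_integral_cong simp: erlang_density_def ennreal_mult[symmetric])
  then show ?thesis
    using nn_integral_erlang_ith_moment[OF assms, of 0 k] by simp
qed

lemma AE_exponential_nonneg: "AE y in density lborel (exponential_density l). 0 \<le> y"
  by (subst AE_density) (auto simp: exponential_density_def)

lemma borel_measurable_PiM_component:
  fixes M :: "'i \<Rightarrow> real measure"
  assumes "\<And>i. sets (M i) = sets borel" and "i \<in> I"
  shows "(\<lambda>x. x i) \<in> borel_measurable (Pi\<^sub>M I M)"
  using measurable_component_singleton[OF assms(2), of M] assms(1) by (simp cong: measurable_cong_sets)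

lemma borel_measurable_PiM_sum_power:
  fixes M :: "'i \<Rightarrow> real measure"
  assumes "\<And>i. sets (M i) = sets borel" and "S \<subseteq> I"
  shows "(\<lambda>x. ennreal ((z + (\<Sum>i\<in>S. x i)) ^ m)) \<in> borel_measurable (Pi\<^sub>M I M)"
  using assms borel_measurable_PiM_component[where M=M, OF assms(1)]
  by (intro measurable_compose[OF _ measurable_ennreal] borel_measurable_power
      borel_measurable_add borel_measurable_sum) auto

lemma nn_integral_exponential_fps_exp:
  fixes Q :: "real fps"
  assumes l: "0 < l" and Q: "\<And>k. 0 \<le> fps_nth Q k"
  shows "(\<integral>\<^sup>+y. ennreal (fps_nth (fps_exp y * Q) m) \<partial>density lborel (exponential_density l))
       = ennreal (fps_nth (geometric_fps (1 / l) * Q) m)"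
proof -
  let ?E = "density lborel (exponential_density l)"
  have "(\<integral>\<^sup>+y. ennreal (fps_nth (fps_exp y * Q) m) \<partial>?E)
      = (\<integral>\<^sup>+y. (\<Sum>k\<le>m. ennreal (y ^ k) * ennreal (fps_nth Q (m - k) / fact k)) \<partial>?E)"
  proof (rule nn_integral_cong_AE)
    show "AE y in ?E. ennreal (fps_nth (fps_exp y * Q) m)
                    = (\<Sum>k\<le>m. ennreal (y ^ k) * ennreal (fps_nth Q (m - k) / fact k))"
      using AE_exponential_nonneg
    proof eventually_elim
      case (elim y)
      have "fps_nth (fps_exp y * Q) m = (\<Sum>k\<le>m. y ^ k * (fps_nth Q (m - k) / fact k))"
        by (simp add: fps_mult_nth atLeast0AtMost)
      then have "ennreal (fps_nth (fps_exp y * Q) m)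
          = (\<Sum>k\<le>m. ennreal (y ^ k * (fps_nth Q (m - k) / fact k)))"
        using elim Q by (simp del: times_divide_eq_right)
      also have "\<dots> = (\<Sum>k\<le>m. ennreal (y ^ k) * ennreal (fps_nth Q (m - k) / fact k))"
        using elim Q by (intro sum.cong refl ennreal_mult) auto
      finally show ?case .
    qed
  qed
  also have "\<dots> = (\<Sum>k\<le>m. ennreal (fact k / l ^ k) * ennreal (fps_nth Q (m - k) / fact k))"
    by (simp add: nn_integral_sum nn_integral_multc nn_integral_exponential_power[OF l])
  also have "\<dots> = ennreal (fps_nth (geometric_fps (1 / l) * Q) m)"
    using l Q by (simp add: fps_mult_nth atLeast0AtMost geometric_fps_def power_divide
        ennreal_mult[symmetric] sum_nonneg)
  finally show ?thesis .
qed

lemma nn_integral_exponential_shift: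
  fixes Q :: "real fps"
  assumes l: "0 < l" and "0 \<le> z" and Q: "\<And>k. 0 \<le> fps_nth Q k"
    and f: "\<And>y. 0 \<le> y \<Longrightarrow> f y = ennreal (fact m * fps_nth (fps_exp (z + y) * Q) m)"
  shows "(\<integral>\<^sup>+y. f y \<partial>density lborel (exponential_density l))
       = ennreal (fact m * fps_nth (fps_exp z * geometric_fps (1 / l) * Q) m)"
proof -
  let ?E = "density lborel (exponential_density l)"
  define R where "R = fps_exp z * Q"
  have R: "0 \<le> fps_nth R k" for k
    unfolding R_def using \<open>0 \<le> z\<close> Q by (intro fps_nth_mult_nonneg) auto
  have "AE y in ?E. f y = ennreal (fact m) * ennreal (fps_nth (fps_exp y * R) m)"
    using AE_exponential_nonneg
    by eventually_elim (simp add: f R_def fps_exp_add_mult ennreal_mult' mult_ac)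
  then have "(\<integral>\<^sup>+y. f y \<partial>?E) = (\<integral>\<^sup>+y. ennreal (fact m) * ennreal (fps_nth (fps_exp y * R) m) \<partial>?E)"
    by (rule nn_integral_cong_AE)
  also have "\<dots> = ennreal (fact m) * ennreal (fps_nth (geometric_fps (1 / l) * R) m)"
  proof -
    have "(\<lambda>y. ennreal (fps_nth (fps_exp y * R) m)) \<in> borel_measurable ?E"
      unfolding fps_mult_nth by simp measurable
    then show ?thesis
      using nn_integral_exponential_fps_exp[OF l R] by (simp add: nn_integral_cmult)
  qed
  finally show ?thesis
    by (simp add: R_def ennreal_mult' mult_ac)
qed

lemma nn_integral_PiM_exponential_sum_power:
  fixes l :: "'i \<Rightarrow> real"
  assumes l: "\<And>i. 0 < l i" and "finite I" "S \<subseteq> I" "0 \<le> z"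
  shows "(\<integral>\<^sup>+x. ennreal ((z + (\<Sum>i\<in>S. x i)) ^ m)
            \<partial>(\<Pi>\<^sub>M i\<in>I. density lborel (exponential_density (l i))))
       = ennreal (fact m * fps_nth (fps_exp z * (\<Prod>i\<in>S. geometric_fps (1 / l i))) m)"
  using assms(2-4)
proof (induction I arbitrary: S z rule: finite_induct)
  case empty
  then show ?case by (simp add: PiM_empty)
next
  case (insert i I)
  define M where "M = (\<lambda>i. density lborel (exponential_density (l i)))"
  interpret product_prob_space M
    unfolding product_prob_space_def product_prob_space_axioms_def product_sigma_finite_def M_def
    using prob_space_exponential_density[OF l] by (auto simp: prob_space_imp_sigma_finite)
  have Fubini: "(\<integral>\<^sup>+x. ennreal ((z + (\<Sum>j\<in>S. x j)) ^ m) \<partial>Pi\<^sub>M (insert i I) M)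
     = (\<integral>\<^sup>+y. \<integral>\<^sup>+x. ennreal ((z + (\<Sum>j\<in>S. (x(i := y)) j)) ^ m) \<partial>Pi\<^sub>M I M \<partial>M i)"
    using insert.prems
    by (intro product_nn_integral_insert_rev insert.hyps borel_measurable_PiM_sum_power)
      (auto simp: M_def)
  show ?case
  proof (cases "i \<in> S")
    case False
    then have "S \<subseteq> I"
      using insert.prems by auto
    have sum_eq: "(\<Sum>j\<in>S. (x(i := y)) j) = (\<Sum>j\<in>S. x j)" for x y
      using False by (intro sum.cong) auto
    show ?thesis
      using Fubini[unfolded sum_eq] insert.IH[OF \<open>S \<subseteq> I\<close> insert.prems(2)] M.emeasure_space_1[of i]
      by (simp add: M_def)
  next
    case True
    have "finite S"
      using insert.prems(1) insert.hyps(1) by (auto intro: finite_subset)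
    then have split_sum: "(\<Sum>j\<in>S. (x(i := y)) j) = y + (\<Sum>j\<in>S - {i}. x j)" for x y
      using True by (subst sum.remove[of _ i]) (auto intro!: sum.cong)
    have "S - {i} \<subseteq> I"
      using insert.prems by auto
    have "(\<integral>\<^sup>+y. \<integral>\<^sup>+x. ennreal ((z + (y + (\<Sum>j\<in>S - {i}. x j))) ^ m) \<partial>Pi\<^sub>M I M \<partial>M i)
        = ennreal (fact m * fps_nth (fps_exp z * geometric_fps (1 / l i)
            * (\<Prod>j\<in>S - {i}. geometric_fps (1 / l j))) m)"
      unfolding M_def
    proof (rule nn_integral_exponential_shift[OF l insert.prems(2)])
      show "0 \<le> fps_nth (\<Prod>j\<in>S - {i}. geometric_fps (1 / l j)) k" for k
        using l by (intro fps_nth_prod_nonneg) (simp add: geometric_fps_def less_imp_le)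
      show "(\<integral>\<^sup>+x. ennreal ((z + (y + (\<Sum>j\<in>S - {i}. x j))) ^ m)
            \<partial>(\<Pi>\<^sub>M j\<in>I. density lborel (exponential_density (l j))))
          = ennreal (fact m * fps_nth (fps_exp (z + y) * (\<Prod>j\<in>S - {i}. geometric_fps (1 / l j))) m)"
        if "0 \<le> y" for y
        using insert.IH[OF \<open>S - {i} \<subseteq> I\<close>, of "z + y"] insert.prems(2) that
        by (simp add: add.assoc)
    qed
    then show ?thesis
      using Fubini[unfolded split_sum] True \<open>finite S\<close> by (simp add: M_def prod.remove[of S i] mult_ac)
  qed
qed

section \<open>The law of the split index\<close>

lemma down_snoc:
  "d \<le> length xs \<Longrightarrow> down (xs @ [s]) a (Suc d) = down xs (if a = Suc (length xs) then s else a) d"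
proof (induction d)
  case 0
  then show ?case by (simp add: Let_def)
next
  case (Suc d)
  then have "length xs - d - 1 < length xs" "1 \<le> length xs - d"
    by auto
  with Suc show ?case
    by (simp del: down.simps(2) add: down.simps(2)[of _ _ d] down.simps(2)[of "xs @ [s]" _ "Suc d"]
        Let_def nth_append)
qed

definition undo_split :: "nat \<Rightarrow> nat \<Rightarrow> nat \<Rightarrow> nat" where
  "undo_split L s a = (if a = Suc L then s else a)"

lemma split_index_snoc:
  assumes "length xs = L" and "a \<noteq> b"
  shows "split_index (L + 2) (xs @ [s]) a b =
    (if undo_split L s a = undo_split L s b then L + 1
     else split_index (L + 1) xs (undo_split L s a) (undo_split L s b))"
proof -
  have down_eq: "down (xs @ [s]) c (L + 2 - k) = down xs (undo_split L s c) (L + 1 - k)"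
    if "k \<in> {1..L + 1}" for c k
  proof -
    have "L + 1 - k \<le> length xs"
      using that assms(1) by auto
    from down_snoc[OF this, of s c]
    have "down (xs @ [s]) c (Suc (L + 1 - k)) = down xs (undo_split L s c) (L + 1 - k)"
      unfolding undo_split_def assms(1) .
    moreover have "L + 2 - k = Suc (L + 1 - k)"
      using that by auto
    ultimately show ?thesis
      by (simp only:)
  qed
  define K where "K = {k \<in> {1..L + 1}.
    down xs (undo_split L s a) (L + 1 - k) = down xs (undo_split L s b) (L + 1 - k)}"
  have "{k \<in> {1..L + 2}. down (xs @ [s]) a (L + 2 - k) = down (xs @ [s]) b (L + 2 - k)} = K"
    unfolding K_def using down_eq assms(2) by (fastforce simp: le_Suc_eq)
  then have "split_index (L + 2) (xs @ [s]) a b = Max K"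
    by (simp add: split_index_def)
  moreover have "split_index (L + 1) xs (undo_split L s a) (undo_split L s b) = Max K"
    by (simp add: split_index_def K_def)
  moreover have "Max K = L + 1" if "undo_split L s a = undo_split L s b"
  proof -
    have "K = {1..L + 1}"
      using that by (auto simp: K_def)
    then show ?thesis
      by (auto intro!: Max_eqI)
  qed
  ultimately show ?thesis
    by simp
qed

lemma split_index_commute: "split_index n xs a b = split_index n xs b a"
  unfolding split_index_def by metis

definition histories :: "nat \<Rightarrow> nat list set" where
  "histories j = {xs. length xs = j \<and> (\<forall>i<j. xs ! i \<le> i)}"

lemma histories_0: "histories 0 = {[]}"
  by (auto simp: histories_def)

lemma histories_Suc: "histories (Suc j) = (\<lambda>(xs, s). xs @ [s]) ` (histories j \<times> {0..<Suc j})"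
proof (intro set_eqI iffI)
  fix ys assume ys: "ys \<in> histories (Suc j)"
  then have "ys \<noteq> []"
    by (auto simp: histories_def)
  with ys have "butlast ys \<in> histories j" "last ys < Suc j"
    by (auto simp: histories_def nth_butlast last_conv_nth)
  moreover have "ys = butlast ys @ [last ys]"
    using \<open>ys \<noteq> []\<close> by simp
  ultimately show "ys \<in> (\<lambda>(xs, s). xs @ [s]) ` (histories j \<times> {0..<Suc j})"
    by (auto intro!: image_eqI[where x="(butlast ys, last ys)"])
qed (auto simp: histories_def nth_append less_Suc_eq)

lemma inj_on_snoc: "inj_on (\<lambda>(xs, s). xs @ [s]) A"
  by (auto simp: inj_on_def)

lemma finite_histories: "finite (histories j)"
  and histories_nonempty: "histories j \<noteq> {}"
  by (induction j) (auto simp: histories_0 histories_Suc)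

lemma card_histories: "card (histories j) = fact j"
  by (induction j) (simp_all add: histories_0 histories_Suc card_image[OF inj_on_snoc]
      card_cartesian_product finite_histories)

lemma bind_pmf_of_set_map_pmf_of_set:
  assumes "finite A" "A \<noteq> {}" "finite B" "B \<noteq> {}"
  shows "bind_pmf (pmf_of_set A) (\<lambda>x. map_pmf (f x) (pmf_of_set B))
       = map_pmf (\<lambda>(x, y). f x y) (pmf_of_set (A \<times> B))"
proof -
  have "pmf_of_set (A \<times> B) = pair_pmf (pmf_of_set A) (pmf_of_set B)"
    by (rule pmf_eqI, clarify) (simp add: pmf_pair assms card_cartesian_product split: split_indicator)
  then show ?thesis
    by (simp add: pair_pmf_def map_bind_pmf map_pmf_def bind_assoc_pmf bind_return_pmf)
qed

lemma split_pmf_eq_pmf_of_set: "split_pmf j = pmf_of_set (histories j)"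
proof (induction j)
  case 0
  then show ?case by (simp add: histories_0 pmf_of_set_singleton)
next
  case (Suc j)
  have "split_pmf (Suc j) = map_pmf (\<lambda>(xs, s). xs @ [s]) (pmf_of_set (histories j \<times> {0..<Suc j}))"
    by (simp add: Suc bind_pmf_of_set_map_pmf_of_set finite_histories histories_nonempty)
  also have "\<dots> = pmf_of_set (histories (Suc j))"
    unfolding histories_Suc
    by (rule map_pmf_of_set_inj[OF inj_on_snoc]) (auto simp: finite_histories histories_nonempty)
  finally show ?case .
qed

definition tip_pairs :: "nat \<Rightarrow> (nat \<times> nat) set" where
  "tip_pairs n = {(a, b). a < b \<and> b < n}"

lemma finite_tip_pairs: "finite (tip_pairs n)"
  by (rule finite_subset[of _ "{..<n} \<times> {..<n}"]) (auto simp: tip_pairs_def)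

lemma tip_pairs_nonempty:
  assumes "2 \<le> n"
  shows "tip_pairs n \<noteq> {}"
proof -
  have "(0, 1) \<in> tip_pairs n"
    using assms by (simp add: tip_pairs_def)
  then show ?thesis
    by blast
qed

lemma sum_tip_pairs_Suc:
  "(\<Sum>p\<in>tip_pairs (Suc N). F p) = (\<Sum>p\<in>tip_pairs N. F p) + (\<Sum>a<N. F (a, N))"
proof -
  have "tip_pairs (Suc N) = tip_pairs N \<union> (\<lambda>a. (a, N)) ` {..<N}"
    "tip_pairs N \<inter> (\<lambda>a. (a, N)) ` {..<N} = {}"
    by (auto simp: tip_pairs_def)
  then show ?thesis
    by (simp add: sum.union_disjoint finite_tip_pairs sum.reindex inj_on_def)
qed

lemma card_tip_pairs: "2 * real (card (tip_pairs n)) = real n * (real n - 1)"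
proof (induction n)
  case (Suc n)
  have "card (tip_pairs (Suc n)) = card (tip_pairs n) + n"
    using sum_tip_pairs_Suc[where N=n and F="\<lambda>_. 1::nat"] by simp
  with Suc show ?case
    by (simp add: algebra_simps)
qed (simp add: tip_pairs_def)

lemma sum_square_symmetric:
  fixes G :: "nat \<Rightarrow> nat \<Rightarrow> 'a::comm_semiring_1"
  assumes "\<And>a b. G a b = G b a"
  shows "(\<Sum>a<N. \<Sum>b<N. G a b) = (\<Sum>a<N. G a a) + 2 * (\<Sum>p\<in>tip_pairs N. G (fst p) (snd p))"
proof (induction N)
  case (Suc N)
  have "(\<Sum>a<Suc N. \<Sum>b<Suc N. G a b)
      = (\<Sum>a<N. \<Sum>b<N. G a b) + ((\<Sum>a<N. G a N) + (\<Sum>b<N. G N b)) + G N N"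
    by (simp add: sum.distrib algebra_simps)
  also have "(\<Sum>b<N. G N b) = (\<Sum>a<N. G a N)"
    using assms by simp
  finally show ?case
    using Suc by (simp add: sum_tip_pairs_Suc algebra_simps mult_2)
qed (simp add: tip_pairs_def)

text \<open>Undoing the last split maps each pair of old tips to itself for every choice of the
  splitting lineage, and to itself once more when one of its tips is the splitting lineage and
  the new daughter replaces it; the pair formed by the two sisters collapses to the diagonal.\<close>
lemma sum_undo_split:
  fixes G :: "nat \<Rightarrow> nat \<Rightarrow> real"
  assumes "\<And>a b. G a b = G b a"
  shows "(\<Sum>s<Suc L. \<Sum>p\<in>tip_pairs (L + 2). G (undo_split L s (fst p)) (undo_split L s (snd p)))
     = real (L + 3) * (\<Sum>p\<in>tip_pairs (Suc L). G (fst p) (snd p)) + (\<Sum>a<Suc L. G a a)"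
proof -
  have "(\<Sum>s<Suc L. \<Sum>p\<in>tip_pairs (L + 2). G (undo_split L s (fst p)) (undo_split L s (snd p)))
      = (\<Sum>s<Suc L. (\<Sum>p\<in>tip_pairs (Suc L). G (fst p) (snd p)) + (\<Sum>a<Suc L. G a s))"
  proof (rule sum.cong[OF refl])
    fix s
    have "(\<Sum>p\<in>tip_pairs (Suc L). G (undo_split L s (fst p)) (undo_split L s (snd p)))
        = (\<Sum>p\<in>tip_pairs (Suc L). G (fst p) (snd p))"
      by (intro sum.cong) (auto simp: tip_pairs_def undo_split_def)
    moreover have "(\<Sum>a<Suc L. G (undo_split L s a) (undo_split L s (Suc L))) = (\<Sum>a<Suc L. G a s)"
      by (intro sum.cong) (auto simp: undo_split_def)
    ultimately show "(\<Sum>p\<in>tip_pairs (L + 2). G (undo_split L s (fst p)) (undo_split L s (snd p)))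
        = (\<Sum>p\<in>tip_pairs (Suc L). G (fst p) (snd p)) + (\<Sum>a<Suc L. G a s)"
      unfolding add_2_eq_Suc' sum_tip_pairs_Suc by simp
  qed
  also have "\<dots> = real (Suc L) * (\<Sum>p\<in>tip_pairs (Suc L). G (fst p) (snd p))
      + (\<Sum>a<Suc L. \<Sum>s<Suc L. G a s)"
    by (simp only: sum.distrib sum_constant card_lessThan
        sum.swap[where g="\<lambda>s a. G a s" and A="{..<Suc L}" and B="{..<Suc L}"])
  also have "\<dots> = real (L + 3) * (\<Sum>p\<in>tip_pairs (Suc L). G (fst p) (snd p)) + (\<Sum>a<Suc L. G a a)"
    unfolding sum_square_symmetric[of G, OF assms] by (simp add: algebra_simps)
  finally show ?thesis .
qed

definition pair_count :: "nat \<Rightarrow> nat list \<Rightarrow> nat \<Rightarrow> real" where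
  "pair_count n xs k = (\<Sum>p\<in>tip_pairs n. of_bool (split_index n xs (fst p) (snd p) = k))"

lemma sum_pair_count_snoc:
  assumes "length xs = L"
  shows "(\<Sum>s<Suc L. pair_count (L + 2) (xs @ [s]) k)
       = real (L + 3) * pair_count (L + 1) xs k + of_bool (k = L + 1) * real (L + 1)"
proof -
  define G :: "nat \<Rightarrow> nat \<Rightarrow> real" where "G c d = (if c = d then of_bool (k = L + 1)
                          else of_bool (split_index (L + 1) xs c d = k))" for c d
  have G_commute: "G c d = G d c" for c d
    by (simp add: G_def split_index_commute)
  have "pair_count (L + 2) (xs @ [s]) k
      = (\<Sum>p\<in>tip_pairs (L + 2). G (undo_split L s (fst p)) (undo_split L s (snd p)))" for s
    unfolding pair_count_def
  proof (intro sum.cong refl)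
    fix p assume "p \<in> tip_pairs (L + 2)"
    then have "fst p \<noteq> snd p"
      by (auto simp: tip_pairs_def)
    then show "of_bool (split_index (L + 2) (xs @ [s]) (fst p) (snd p) = k)
        = G (undo_split L s (fst p)) (undo_split L s (snd p))"
      unfolding split_index_snoc[OF assms \<open>fst p \<noteq> snd p\<close>] G_def by simp
  qed
  then have "(\<Sum>s<Suc L. pair_count (L + 2) (xs @ [s]) k)
      = real (L + 3) * (\<Sum>p\<in>tip_pairs (Suc L). G (fst p) (snd p)) + (\<Sum>a<Suc L. G a a)"
    using sum_undo_split[of G, OF G_commute] by simp
  also have "(\<Sum>p\<in>tip_pairs (Suc L). G (fst p) (snd p)) = pair_count (L + 1) xs k"
    unfolding pair_count_def by (intro sum.cong) (auto simp: G_def tip_pairs_def)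
  also have "(\<Sum>a<Suc L. G a a) = of_bool (k = L + 1) * real (L + 1)"
    by (simp add: G_def)
  finally show ?thesis .
qed

definition split_count :: "nat \<Rightarrow> nat \<Rightarrow> real" where
  "split_count n k = (\<Sum>xs\<in>histories (n - 1). pair_count n xs k)"

lemma split_count_Suc_Suc:
  "split_count (L + 2) k
     = real (L + 3) * split_count (L + 1) k + of_bool (k = L + 1) * real (L + 1) * fact L"
proof -
  have "split_count (L + 2) k = (\<Sum>xs\<in>histories L. \<Sum>s<Suc L. pair_count (L + 2) (xs @ [s]) k)"
    unfolding split_count_def add_2_eq_Suc' diff_Suc_1 histories_Suc sum.reindex[OF inj_on_snoc]
    by (simp add: sum.cartesian_product lessThan_atLeast0 case_prod_beta del: sum.op_ivl_Suc)
  also have "\<dots> = (\<Sum>xs\<in>histories L.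
      real (L + 3) * pair_count (L + 1) xs k + of_bool (k = L + 1) * real (L + 1))"
    by (intro sum.cong refl sum_pair_count_snoc) (simp add: histories_def)
  also have "\<dots> = real (L + 3) * split_count (L + 1) k + of_bool (k = L + 1) * real (L + 1) * fact L"
    by (simp add: split_count_def sum.distrib sum_distrib_left card_histories)
  finally show ?thesis .
qed

lemma split_count_eq:
  "split_count (Suc n) k =
     (if 1 \<le> k \<and> k \<le> n then fact (Suc n) * real (n + 2) / (real (k + 1) * real (k + 2)) else 0)"
proof (induction n)
  case 0
  have "tip_pairs 1 = {}"
    by (auto simp: tip_pairs_def)
  then show ?case
    by (simp add: split_count_def pair_count_def)
next
  case (Suc n)
  have rec: "split_count (Suc (Suc n)) k
      = real (n + 3) * split_count (Suc n) k + of_bool (k = Suc n) * fact (Suc n)"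
    using split_count_Suc_Suc[of n k] by simp
  have denom: "real (k + 1) * real (k + 2) > 0"
    by simp
  consider (new) "k = Suc n" | (old) "1 \<le> k" "k \<le> n" | (none) "\<not> (1 \<le> k \<and> k \<le> Suc n)"
    by linarith
  then show ?case
  proof cases
    case new
    then show ?thesis
      using rec Suc.IH denom by (simp add: field_simps fact_Suc[of "Suc n"] del: fact_Suc)
  next
    case old
    then show ?thesis
      using rec Suc.IH denom by (simp add: field_simps fact_Suc[of "Suc n"] del: fact_Suc)
  qed (use rec Suc.IH in auto)
qed

lemma pmf_kappa_pmf_split_count:
  assumes "2 \<le> n"
  shows "pmf (kappa_pmf n) k = split_count n k / (fact (n - 1) * real (card (tip_pairs n)))"
proof -
  define S where "S = histories (n - 1) \<times> tip_pairs n"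
  define g where "g = (\<lambda>(xs, (a, b)). split_index n xs a b)"
  have finite_S: "finite S" and "S \<noteq> {}"
    using assms by (simp_all add: S_def finite_histories histories_nonempty finite_tip_pairs
        tip_pairs_nonempty)
  have "kappa_pmf n = map_pmf g (pmf_of_set S)"
    unfolding kappa_pmf_def split_pmf_eq_pmf_of_set tip_pairs_def[symmetric] S_def g_def
    using assms by (subst bind_pmf_of_set_map_pmf_of_set)
      (auto simp: finite_histories histories_nonempty finite_tip_pairs tip_pairs_nonempty)
  then have "pmf (kappa_pmf n) k = real (card {q \<in> S. g q = k}) / real (card S)"
    using finite_S \<open>S \<noteq> {}\<close> by (simp add: pmf_map measure_pmf_of_set Int_def vimage_def conj_commute)
  also have "real (card {q \<in> S. g q = k}) = (\<Sum>q\<in>S. of_bool (g q = k))"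
    using finite_S by (simp add: of_bool_def sum.inter_filter[symmetric])
  also have "\<dots> = split_count n k"
    unfolding split_count_def pair_count_def S_def sum.cartesian_product
    by (simp add: g_def case_prod_beta)
  also have "real (card S) = fact (n - 1) * real (card (tip_pairs n))"
    by (simp add: S_def card_cartesian_product card_histories)
  finally show ?thesis .
qed

lemma pmf_kappa_pmf:
  assumes "2 \<le> n"
  shows "pmf (kappa_pmf n) k = (if 1 \<le> k \<and> k \<le> n - 1
           then 2 * real (n + 1) / ((real n - 1) * real (k + 1) * real (k + 2)) else 0)"
proof -
  obtain p where n: "n = Suc p" and "1 \<le> p"
    using assms by (cases n) auto
  have "2 * real (card (tip_pairs n)) = real n * (real n - 1)"
    by (rule card_tip_pairs)
  then have pairs: "real (card (tip_pairs n)) = real (Suc p) * real p / 2"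
    unfolding n by simp
  have "pmf (kappa_pmf n) k = split_count (Suc p) k / (fact p * (real (Suc p) * real p / 2))"
    unfolding pmf_kappa_pmf_split_count[OF assms] pairs by (simp add: n)
  also have "\<dots> = (if 1 \<le> k \<and> k \<le> p
           then 2 * real (p + 2) / (real p * real (k + 1) * real (k + 2)) else 0)"
  proof (cases "1 \<le> k \<and> k \<le> p")
    case True
    have "fact p > (0::real)" "real p > 0" "real (k + 1) > 0" "real (k + 2) > 0"
      using \<open>1 \<le> p\<close> by auto
    with True show ?thesis
      unfolding split_count_eq fact_Suc[of p] by (simp add: divide_simps del: fact_Suc)
  qed (auto simp: split_count_eq)
  finally show ?thesis
    by (simp add: n)
qed

section \<open>Moments of the coalescent time as power series coefficients\<close>

text \<open>Only the rates on {1..n} enter yule_space; the dummy rate at 0 makes every factor of the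
  product measure a probability space, as the product-measure lemmas require.\<close>
definition yule_rate :: "nat \<Rightarrow> real" where
  "yule_rate i = (if i = 0 then 1 else real i)"

lemma yule_rate_pos: "0 < yule_rate i"
  by (simp add: yule_rate_def)

lemma yule_space_eq:
  "yule_space n = measure_pmf (kappa_pmf n) \<Otimes>\<^sub>M
     (\<Pi>\<^sub>M i\<in>{1..n}. density lborel (exponential_density (yule_rate i)))"
  unfolding yule_space_def by (intro arg_cong[where f="\<lambda>N. _ \<Otimes>\<^sub>M N"] PiM_cong) (auto simp: yule_rate_def)

lemma AE_PiM_exponential_nonneg:
  assumes "\<And>i. 0 < l i" and "finite I"
  shows "AE y in (\<Pi>\<^sub>M i\<in>I. density lborel (exponential_density (l i))). \<forall>i\<in>I. 0 \<le> y i"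
proof -
  interpret product_prob_space "\<lambda>i. density lborel (exponential_density (l i))" I
    unfolding product_prob_space_def product_prob_space_axioms_def product_sigma_finite_def
    using prob_space_exponential_density[OF assms(1)] by (auto simp: prob_space_imp_sigma_finite)
  show ?thesis
    using assms(2) AE_component[OF _ AE_exponential_nonneg] by (simp add: AE_finite_all)
qed

lemma borel_measurable_pmf_PiM_tail_sum_power:
  fixes M :: "nat \<Rightarrow> real measure"
  assumes "\<And>i. sets (M i) = sets borel"
  shows "(\<lambda>(k, y). (\<Sum>i\<in>{k<..n}. y i) ^ m :: real)
           \<in> borel_measurable (measure_pmf p \<Otimes>\<^sub>M Pi\<^sub>M {1..n} M)"
proof -
  have sum_eq: "(\<Sum>i\<in>{k<..n}. y i) = (\<Sum>i\<in>{1..n}. of_bool (k < i) * y i)"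
    for k and y :: "nat \<Rightarrow> real"
    by (rule sum.mono_neutral_cong_left) auto
  have "(\<lambda>(k, y). (\<Sum>i\<in>{k<..n}. y i) ^ m :: real)
      = (\<lambda>q. (\<Sum>i\<in>{1..n}. of_bool (fst q < i) * snd q i) ^ m)"
    unfolding sum_eq case_prod_beta ..
  moreover have "(\<lambda>q. of_bool (fst q < i) :: real)
      \<in> borel_measurable (measure_pmf p \<Otimes>\<^sub>M Pi\<^sub>M {1..n} M)" for i
    by (rule measurable_compose[OF measurable_fst]) simp
  moreover have "(\<lambda>q. snd q i) \<in> borel_measurable (measure_pmf p \<Otimes>\<^sub>M Pi\<^sub>M {1..n} M)"
    if "i \<in> {1..n}" for i
    using that assms by (intro measurable_compose[OF measurable_snd] borel_measurable_PiM_component)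
  ultimately show ?thesis
    by (simp only:) (intro borel_measurable_power borel_measurable_sum borel_measurable_times; auto)
qed

lemma tau_moment_eq_sum_pmf:
  assumes "2 \<le> n"
  shows "tau_moment n m = (\<Sum>k\<in>{1..n-1}.
           pmf (kappa_pmf n) k * (fact m * fps_nth (\<Prod>i\<in>{k<..n}. geometric_fps (1 / real i)) m))"
proof -
  define K where "K = measure_pmf (kappa_pmf n)"
  define N where "N = (\<Pi>\<^sub>M i\<in>{1..n}. density lborel (exponential_density (yule_rate i)))"
  define f where "f = (\<lambda>(k, y). (\<Sum>i\<in>{k<..n}. y i) ^ m :: real)"
  define c where "c = (\<lambda>k. fact m * fps_nth (\<Prod>i\<in>{k<..n}. geometric_fps (1 / real i)) m)"
  interpret N: prob_space N
    unfolding N_def using prob_space_exponential_density[OF yule_rate_pos] by (rule prob_space_PiM)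
  have c_nonneg: "0 \<le> c k" for k
    unfolding c_def by (intro mult_nonneg_nonneg fps_nth_prod_nonneg) (auto simp: geometric_fps_def)
  have inner: "(\<integral>\<^sup>+y. ennreal (f (k, y)) \<partial>N) = ennreal (c k)" for k
  proof -
    have "(\<Prod>i\<in>{k<..n}. geometric_fps (1 / yule_rate i)) = (\<Prod>i\<in>{k<..n}. geometric_fps (1 / real i))"
      by (intro prod.cong) (auto simp: yule_rate_def)
    moreover have "{k<..n} \<subseteq> {1..n}"
      by auto
    ultimately show ?thesis
      using nn_integral_PiM_exponential_sum_power[where l=yule_rate, OF yule_rate_pos, where I="{1..n}" and S="{k<..n}" and z=0]
      by (simp add: f_def N_def c_def)
  qed
  have f_measurable: "f \<in> borel_measurable (K \<Otimes>\<^sub>M N)"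
    unfolding f_def K_def N_def by (rule borel_measurable_pmf_PiM_tail_sum_power) simp
  have f_nonneg: "AE p in K \<Otimes>\<^sub>M N. 0 \<le> f p"
  proof (rule pair_sigma_finite.AE_pair_measure)
    show "pair_sigma_finite K N"
      unfolding K_def pair_sigma_finite_def
      by (simp add: prob_space_imp_sigma_finite N.prob_space_axioms prob_space_measure_pmf)
    show "{p \<in> space (K \<Otimes>\<^sub>M N). 0 \<le> f p} \<in> sets (K \<Otimes>\<^sub>M N)"
      using f_measurable by measurable
    have "AE y in N. 0 \<le> f (k, y)" for k
      using AE_PiM_exponential_nonneg[OF yule_rate_pos finite_atLeastAtMost]
      unfolding N_def by eventually_elim (auto simp: f_def intro!: zero_le_power sum_nonneg)
    then show "AE k in K. AE y in N. 0 \<le> f (k, y)"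
      by simp
  qed
  have "tau_moment n m = enn2real (\<integral>\<^sup>+p. ennreal (f p) \<partial>(K \<Otimes>\<^sub>M N))"
    unfolding tau_moment_def yule_space_eq K_def[symmetric] N_def[symmetric]
    using integral_eq_nn_integral[OF f_measurable f_nonneg] by (simp add: f_def case_prod_beta)
  also have "(\<integral>\<^sup>+p. ennreal (f p) \<partial>(K \<Otimes>\<^sub>M N)) = (\<integral>\<^sup>+k. ennreal (c k) \<partial>K)"
    using f_measurable by (simp add: N.nn_integral_fst[symmetric] inner)
  also have "\<dots> = (\<Sum>k\<in>{1..n-1}. ennreal (c k) * pmf (kappa_pmf n) k)"
    unfolding K_def using pmf_kappa_pmf[OF assms]
    by (intro nn_integral_measure_pmf_support) (auto simp: set_pmf_iff)
  also have "\<dots> = ennreal (\<Sum>k\<in>{1..n-1}. c k * pmf (kappa_pmf n) k)"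
    using c_nonneg by (subst sum_ennreal[symmetric]) (auto simp: ennreal_mult)
  moreover have "0 \<le> (\<Sum>k\<in>{1..n-1}. c k * pmf (kappa_pmf n) k)"
    using c_nonneg by (simp add: sum_nonneg)
  ultimately show ?thesis
    by (simp add: c_def mult_ac)
qed

definition geometric_prod :: "nat \<Rightarrow> real fps" where
  "geometric_prod n = (\<Prod>j\<in>{1..n}. geometric_fps (1 / real j))"

definition inverse_geometric_prod :: "nat \<Rightarrow> real fps" where
  "inverse_geometric_prod k = (\<Prod>j\<in>{1..k}. 1 - fps_const (1 / real j) * fps_X)"

lemma prod_geometric_fps_greaterThanAtMost:
  assumes "k \<le> n"
  shows "(\<Prod>i\<in>{k<..n}. geometric_fps (1 / real i)) = geometric_prod n * inverse_geometric_prod k"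
proof -
  have "{1..n} = {1..k} \<union> {k<..n}"
    using assms by auto
  then have "geometric_prod n
      = (\<Prod>j\<in>{1..k}. geometric_fps (1 / real j)) * (\<Prod>i\<in>{k<..n}. geometric_fps (1 / real i))"
    unfolding geometric_prod_def by (simp add: prod.union_disjoint ivl_disj_int)
  moreover have "(\<Prod>j\<in>{1..k}. geometric_fps (1 / real j)) * inverse_geometric_prod k = 1"
    unfolding inverse_geometric_prod_def prod.distrib[symmetric]
    by (simp add: geometric_fps_times_one_minus)
  ultimately show ?thesis
    by (simp add: mult_ac)
qed

lemma geometric_prod_times_inverse: "geometric_prod n * inverse_geometric_prod n = 1"
  using prod_geometric_fps_greaterThanAtMost[of n n] by simp

lemma sum_inverse_geometric_prod:
  assumes "1 \<le> n"
  shows "(\<Sum>k\<in>{1..n-1}. fps_const (1 / (real (k + 1) * real (k + 2))) * (1 + fps_X) * inverse_geometric_prod k)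
       = fps_const (1 / 2) * (1 - fps_X) - fps_const (1 / real (n + 1)) * inverse_geometric_prod n"
  using assms
proof (induction n rule: dec_induct)
  case base
  show ?case
    by (simp add: inverse_geometric_prod_def)
next
  case (step n)
  define D where "D = inverse_geometric_prod n"
  define a b c where "a = 1 / (real (n + 1) * real (n + 2))" and "b = 1 / real (n + 1)"
    and "c = 1 / real (n + 2)"
  have D_Suc: "inverse_geometric_prod (Suc n) = D * (1 - fps_const b * fps_X)"
    by (simp add: inverse_geometric_prod_def D_def b_def atLeastAtMostSuc_conv mult_ac)
  have "{1..Suc n - 1} = insert n {1..n - 1}"
    using step.hyps by auto
  then have "(\<Sum>k\<in>{1..Suc n - 1}. fps_const (1 / (real (k + 1) * real (k + 2))) * (1 + fps_X) * inverse_geometric_prod k)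
      = fps_const a * (1 + fps_X) * D + (fps_const (1 / 2) * (1 - fps_X) - fps_const b * D)"
    using step.IH step.hyps by (simp add: a_def b_def D_def)
  also have "\<dots> = fps_const (1 / 2) * (1 - fps_X) - fps_const c * (D * (1 - fps_const b * fps_X))
      + D * ((fps_const a - fps_const b + fps_const c) + (fps_const a - fps_const c * fps_const b) * fps_X)"
  proof -
    have "A * (1 + X) * D + (H - B * D) = H - C * (D * (1 - E * X)) + D * ((A - B + C) + (A - C * E) * X)"
      for A B C E H X :: "real fps"
      by (simp add: algebra_simps)
    then show ?thesis .
  qed
  also have "fps_const a - fps_const b + fps_const c = 0"
    by (simp add: a_def b_def c_def field_simps)
  also have "fps_const a - fps_const c * fps_const b = 0"
    by (simp add: a_def b_def c_def field_simps)
  finally show ?case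
    by (simp add: D_Suc c_def)
qed

definition yule_fps :: "nat \<Rightarrow> real fps" where
  "yule_fps n = (1 - fps_X) * geometric_fps (-1) * geometric_prod n"

lemma sum_pmf_kappa_pmf_prod_geometric_fps:
  assumes "2 \<le> n"
  shows "(\<Sum>k\<in>{1..n-1}. fps_const (pmf (kappa_pmf n) k) * (\<Prod>i\<in>{k<..n}. geometric_fps (1 / real i)))
       = fps_const ((real n + 1) / (real n - 1)) * yule_fps n - fps_const (2 / (real n - 1)) * geometric_fps (-1)"
proof -
  define C where "C = 2 * real (n + 1) / (real n - 1)"
  define T where "T = (\<Sum>k\<in>{1..n-1}. fps_const (1 / (real (k + 1) * real (k + 2))) * inverse_geometric_prod k)"
  have "(\<Sum>k\<in>{1..n-1}. fps_const (pmf (kappa_pmf n) k) * (\<Prod>i\<in>{k<..n}. geometric_fps (1 / real i)))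
      = (\<Sum>k\<in>{1..n-1}. fps_const C * geometric_prod n
           * (fps_const (1 / (real (k + 1) * real (k + 2))) * inverse_geometric_prod k))"
    using assms
    by (intro sum.cong refl) (auto simp: pmf_kappa_pmf prod_geometric_fps_greaterThanAtMost C_def mult_ac)
  also have "\<dots> = fps_const C * geometric_prod n * T"
    by (simp add: T_def sum_distrib_left)
  also have "T = geometric_fps (-1) * ((1 + fps_X) * T)"
  proof -
    have "1 - fps_const (-1) * fps_X = (1 + fps_X :: real fps)"
      by (rule fps_ext) simp
    then have "geometric_fps (-1) * (1 + fps_X) = (1 :: real fps)"
      using geometric_fps_times_one_minus[of "-1 :: real"] by (simp only:)
    then show ?thesis
      by (simp add: mult.assoc[symmetric])
  qed
  also have "(1 + fps_X) * T = fps_const (1 / 2) * (1 - fps_X) - fps_const (1 / real (n + 1)) * inverse_geometric_prod n"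
    using sum_inverse_geometric_prod[of n] assms unfolding T_def by (simp add: sum_distrib_left mult_ac)
  also have "fps_const C * geometric_prod n * (geometric_fps (-1) * \<dots>)
      = fps_const (C * (1 / 2)) * yule_fps n
        - fps_const (C * (1 / real (n + 1))) * geometric_fps (-1) * (geometric_prod n * inverse_geometric_prod n)"
  proof -
    have "K * G * (B * (H * (1 - X) - L * D)) = (K * H) * ((1 - X) * B * G) - (K * L) * B * (G * D)"
      for K G B H X L D :: "real fps"
      by (simp add: algebra_simps)
    then show ?thesis
      unfolding yule_fps_def fps_const_mult[symmetric] .
  qed
  also have "C * (1 / 2) = (real n + 1) / (real n - 1)"
    by (simp add: C_def field_simps del: of_nat_Suc of_nat_add)
  also have "C * (1 / real (n + 1)) = 2 / (real n - 1)"
    by (simp add: C_def field_simps del: of_nat_Suc of_nat_add)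
  finally show ?thesis
    by (simp add: geometric_prod_times_inverse)
qed

lemma tau_moment_eq_yule_fps:
  assumes "2 \<le> n"
  shows "tau_moment n m = (-1) ^ (m + 1) * 2 * fact m / (real n - 1)
      + (real n + 1) / (real n - 1) * (fact m * fps_nth (yule_fps n) m)"
proof -
  have "tau_moment n m = fact m * fps_nth (\<Sum>k\<in>{1..n-1}.
      fps_const (pmf (kappa_pmf n) k) * (\<Prod>i\<in>{k<..n}. geometric_fps (1 / real i))) m"
    by (simp add: tau_moment_eq_sum_pmf[OF assms] fps_sum_nth sum_distrib_left mult_ac)
  also have "\<dots> = fact m * ((real n + 1) / (real n - 1) * fps_nth (yule_fps n) m - 2 / (real n - 1) * (-1) ^ m)"
    unfolding sum_pmf_kappa_pmf_prod_geometric_fps[OF assms] by (simp add: geometric_fps_def)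
  finally show ?thesis
    by (simp add: algebra_simps)
qed

section \<open>Partition sums\<close>

lemma sum_fun_upd:
  fixes g :: "'b \<Rightarrow> 'c \<Rightarrow> 'a::ab_group_add"
  assumes "finite A" and "i \<in> A"
  shows "(\<Sum>j\<in>A. g j ((h(i := v)) j)) = (\<Sum>j\<in>A. g j (h j)) - g i (h i) + g i v"
proof -
  have "(\<Sum>j\<in>A. g j ((h(i := v)) j)) = g i v + (\<Sum>j\<in>A - {i}. g j (h j))"
    using assms by (subst sum.remove[of _ i]) (auto intro!: sum.cong)
  moreover have "(\<Sum>j\<in>A. g j (h j)) = g i (h i) + (\<Sum>j\<in>A - {i}. g j (h j))"
    using assms by (subst sum.remove[of _ i]) auto
  ultimately show ?thesis
    by simp
qed

lemma Avec_nonneg: "k \<in> Avec m \<Longrightarrow> 0 \<le> k i"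
  by (simp add: Avec_def)

lemma mem_AvecI:
  assumes nonneg: "\<And>i. 0 \<le> k i" and supp: "\<And>i. i = 0 \<or> M < i \<Longrightarrow> k i = 0"
    and weight: "(\<Sum>i=1..M. int i * k i) = int m" and "m \<le> M"
  shows "k \<in> Avec m"
proof -
  have zero: "k i = 0" if "m < i" for i
  proof (cases "M < i")
    case False
    with that have "i \<in> {1..M}"
      by auto
    then have "int i * k i \<le> int m"
      unfolding weight[symmetric] using nonneg by (intro member_le_sum) auto
    show ?thesis
    proof (rule ccontr)
      assume "k i \<noteq> 0"
      with nonneg[of i] have "int i * 1 \<le> int i * k i"
        by (intro mult_left_mono) auto
      with \<open>int i * k i \<le> int m\<close> that show False
        by simp
    qed
  qed (use supp in auto)
  have "(\<Sum>i=1..M. int i * k i) = (\<Sum>i=1..m. int i * k i)"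
    using \<open>m \<le> M\<close> zero by (intro sum.mono_neutral_right) auto
  with weight nonneg zero supp show ?thesis
    by (auto simp: Avec_def)
qed

lemma Avec_decrement:
  assumes k: "k \<in> Avec m" and i: "i \<in> {1..m}" and "1 \<le> k i"
  shows "k(i := k i - 1) \<in> Avec (m - i)"
proof (rule mem_AvecI[where M=m])
  have "(\<Sum>j=1..m. int j * (k(i := k i - 1)) j) = (\<Sum>j=1..m. int j * k j) - int i"
    using i by (subst sum_fun_upd[where g="\<lambda>j a. int j * a"]) (auto simp: algebra_simps)
  then show "(\<Sum>j=1..m. int j * (k(i := k i - 1)) j) = int (m - i)"
    using k i by (simp add: Avec_def)
qed (use k i \<open>1 \<le> k i\<close> in \<open>auto simp: Avec_def\<close>)

lemma Avec_increment:
  assumes k: "k \<in> Avec (m - i)" and i: "i \<in> {1..m}"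
  shows "k(i := k i + 1) \<in> Avec m"
proof (rule mem_AvecI[where M=m])
  have "(\<Sum>j=1..m. int j * k j) = (\<Sum>j=1..m - i. int j * k j)"
    using k by (intro sum.mono_neutral_right) (auto simp: Avec_def)
  moreover have "(\<Sum>j=1..m. int j * (k(i := k i + 1)) j) = (\<Sum>j=1..m. int j * k j) + int i"
    using i by (subst sum_fun_upd[where g="\<lambda>j a. int j * a"]) (auto simp: algebra_simps)
  ultimately show "(\<Sum>j=1..m. int j * (k(i := k i + 1)) j) = int m"
    using k i by (simp add: Avec_def)
qed (use k i in \<open>auto simp: Avec_def\<close>)

lemma finite_Avec: "finite (Avec m)"
proof (rule finite_subset)
  show "Avec m
      \<subseteq> {k. \<forall>i. (i \<in> {1..m} \<longrightarrow> k i \<in> {0..int m}) \<and> (i \<notin> {1..m} \<longrightarrow> k i = 0)}"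
  proof safe
    fix k i assume k: "k \<in> Avec m" and i: "i \<in> {1..m}"
    then have nonneg: "\<And>j. 0 \<le> k j" and "(\<Sum>j=1..m. int j * k j) = int m"
      by (auto simp: Avec_def)
    then have "int i * k i \<le> int m"
      using i by (metis (no_types, lifting) finite_atLeastAtMost member_le_sum mult_nonneg_nonneg of_nat_0_le_iff)
    moreover have "1 * k i \<le> int i * k i"
      using i nonneg[of i] by (intro mult_right_mono) auto
    ultimately show "k i \<in> {0..int m}"
      using nonneg[of i] by simp
  qed (auto simp: Avec_def simp flip: less_eq_Suc_le)
qed (intro finite_set_of_finite_funs; simp)

definition partition_term :: "(nat \<Rightarrow> real) \<Rightarrow> nat \<Rightarrow> (nat \<Rightarrow> int) \<Rightarrow> real" where
  "partition_term y N k = (\<Prod>i=1..N. y i ^ nat (k i) / fact (nat (k i)))"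

definition partition_sum :: "(nat \<Rightarrow> real) \<Rightarrow> nat \<Rightarrow> real" where
  "partition_sum y m = (\<Sum>k\<in>Avec m. partition_term y m k)"

lemma partition_term_extend:
  assumes "k \<in> Avec m" and "m \<le> N"
  shows "partition_term y N k = partition_term y m k"
  unfolding partition_term_def using assms by (intro prod.mono_neutral_right) (auto simp: Avec_def)

lemma partition_term_mult:
  "partition_term (\<lambda>i. y i * z i) N k = partition_term y N k * (\<Prod>i=1..N. z i ^ nat (k i))"
  by (simp add: partition_term_def power_mult_distrib prod.distrib[symmetric] mult_ac)

lemma partition_term_decrement:
  assumes "i \<in> {1..N}" and "1 \<le> k i"
  shows "of_int (k i) * partition_term y N k = y i * partition_term y N (k(i := k i - 1))"
proof -
  define r where "r = (\<Prod>j\<in>{1..N} - {i}. y j ^ nat (k j) / fact (nat (k j)))"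
  have "nat (k i) = Suc (nat (k i - 1))"
    using assms(2) by simp
  then have "of_int (k i) * (y i ^ nat (k i) / fact (nat (k i)))
      = y i * (y i ^ nat (k i - 1) / fact (nat (k i - 1)))"
    using assms(2) by (simp add: field_simps)
  moreover have "partition_term y N k = y i ^ nat (k i) / fact (nat (k i)) * r"
    unfolding partition_term_def r_def using assms(1) by (subst prod.remove[of _ i]) auto
  moreover have "partition_term y N (k(i := k i - 1)) = y i ^ nat (k i - 1) / fact (nat (k i - 1)) * r"
    unfolding partition_term_def r_def using assms(1)
    by (subst prod.remove[of _ i]) (auto intro!: prod.cong)
  ultimately show ?thesis
    by (metis mult.assoc)
qed

lemma partition_sum_0: "partition_sum y 0 = 1"
proof -
  have "Avec 0 = {\<lambda>_. 0}"
    by (auto simp: Avec_def)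
  then show ?thesis
    by (simp add: partition_sum_def partition_term_def)
qed

lemma sum_Avec_times_partition_term:
  assumes i: "i \<in> {1..m}"
  shows "(\<Sum>k\<in>Avec m. of_int (k i) * partition_term y m k) = y i * partition_sum y (m - i)"
proof -
  let ?A = "{k \<in> Avec m. 1 \<le> k i}"
  have bij: "bij_betw (\<lambda>k. k(i := k i - 1)) ?A (Avec (m - i))"
    using i by (intro bij_betw_byWitness[where f'="\<lambda>k. k(i := k i + 1)"])
      (auto intro: Avec_decrement Avec_increment simp: image_subset_iff Avec_nonneg)
  have "(\<Sum>k\<in>Avec m. of_int (k i) * partition_term y m k)
      = (\<Sum>k\<in>?A. of_int (k i) * partition_term y m k)"
    by (intro sum.mono_neutral_right finite_Avec) (auto simp: Avec_def not_le intro: antisym)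
  also have "\<dots> = (\<Sum>k\<in>?A. y i * partition_term y (m - i) (k(i := k i - 1)))"
    using i by (intro sum.cong refl)
      (auto simp: partition_term_decrement partition_term_extend Avec_decrement)
  also have "\<dots> = y i * partition_sum y (m - i)"
    unfolding partition_sum_def sum_distrib_left using sum.reindex_bij_betw[OF bij] by simp
  finally show ?thesis .
qed

lemma partition_sum_rec:
  assumes "1 \<le> m"
  shows "real m * partition_sum y m = (\<Sum>i=1..m. real i * y i * partition_sum y (m - i))"
proof -
  have "real m * partition_sum y m
      = (\<Sum>k\<in>Avec m. \<Sum>i=1..m. real i * (of_int (k i) * partition_term y m k))"
    unfolding partition_sum_def sum_distrib_left
  proof (intro sum.cong refl)
    fix k assume "k \<in> Avec m"
    then have "real_of_int (\<Sum>i=1..m. int i * k i) = real m"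
      by (simp add: Avec_def)
    then have "real m = (\<Sum>i=1..m. real i * of_int (k i))"
      by (simp add: of_int_sum)
    then show "real m * partition_term y m k = (\<Sum>i=1..m. real i * (of_int (k i) * partition_term y m k))"
      by (simp add: sum_distrib_right mult.assoc)
  qed
  also have "\<dots> = (\<Sum>i=1..m. real i * y i * partition_sum y (m - i))"
    by (subst sum.swap) (simp add: sum_distrib_left[symmetric] sum_Avec_times_partition_term mult.assoc)
  finally show ?thesis .
qed

text \<open>partition_sum y m is the coefficient of x^m in exp (\<Sum>i. y i * x^i), so it is determined by
  the differential equation F' = (\<Sum>i. i * y i * x^(i-1)) * F, which is this recursion.\<close>
lemma partition_sum_unique:
  assumes "g 0 = 1" and "\<And>m. 1 \<le> m \<Longrightarrow> real m * g m = (\<Sum>i=1..m. a i * g (m - i))"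
  shows "g m = partition_sum (\<lambda>i. a i / real i) m"
proof (induction m rule: less_induct)
  case (less m)
  show ?case
  proof (cases "m = 0")
    case True
    then show ?thesis
      using assms(1) by (simp add: partition_sum_0)
  next
    case False
    then have "real m * g m = (\<Sum>i=1..m. real i * (a i / real i) * partition_sum (\<lambda>i. a i / real i) (m - i))"
      using assms(2)[of m] less by (auto intro!: sum.cong)
    also have "\<dots> = real m * partition_sum (\<lambda>i. a i / real i) m"
      using False by (simp add: partition_sum_rec)
    finally show ?thesis
      using False by simp
  qed
qed

section \<open>The coefficients c_k\<close>

lemma ccoef_eq_0_if_negative: "\<exists>i\<ge>1. k i < 0 \<Longrightarrow> ccoef w k = 0"
  by (cases w) auto

lemma ccoef_first_term:
  assumes IH: "\<And>k'. k' \<in> Avec w \<Longrightarrow>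
      real_of_int (ccoef w k') = fact w * partition_term (\<lambda>i. 1 / real i) w k'"
    and k: "k \<in> Avec (Suc w)"
  shows "real_of_int (ccoef w (k(1 := k 1 - 1)))
       = fact w * of_int (k 1) * partition_term (\<lambda>i. 1 / real i) (Suc w) k"
proof (cases "k 1 = 0")
  case True
  then show ?thesis
    by (simp add: ccoef_eq_0_if_negative exI[of _ 1])
next
  case False
  let ?P = "partition_term (\<lambda>i. 1 / real i)"
  define k' where "k' = k(1 := k 1 - 1)"
  have "1 \<le> k 1"
    using False Avec_nonneg[OF k, of 1] by simp
  then have k': "k' \<in> Avec w"
    using Avec_decrement[OF k, of 1] by (simp add: k'_def)
  have "of_int (k 1) * ?P (Suc w) k = ?P (Suc w) k'"
    using partition_term_decrement[of 1 "Suc w" k] \<open>1 \<le> k 1\<close> by (simp add: k'_def)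
  also have "\<dots> = ?P w k'"
    using partition_term_extend[OF k', of "Suc w"] by simp
  finally show ?thesis
    using IH[OF k'] by (simp add: k'_def)
qed

lemma ccoef_shift_term:
  assumes IH: "\<And>k'. k' \<in> Avec w \<Longrightarrow>
      real_of_int (ccoef w k') = fact w * partition_term (\<lambda>i. 1 / real i) w k'"
    and k: "k \<in> Avec (Suc w)" and j: "j \<in> {1..w}"
  shows "real_of_int (int j * (k j + 1) * ccoef w (k(j := k j + 1, Suc j := k (Suc j) - 1)))
       = fact w * real (Suc j) * of_int (k (Suc j)) * partition_term (\<lambda>i. 1 / real i) (Suc w) k"
proof (cases "k (Suc j) = 0")
  case True
  then show ?thesis
    by (simp add: ccoef_eq_0_if_negative exI[of _ "Suc j"])
next
  case False
  let ?P = "partition_term (\<lambda>i. 1 / real i)"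
  define k1 where "k1 = k(Suc j := k (Suc j) - 1)"
  define k2 where "k2 = k1(j := k1 j + 1)"
  have "1 \<le> k (Suc j)"
    using False Avec_nonneg[OF k, of "Suc j"] by simp
  then have k1: "k1 \<in> Avec (w - j)"
    using Avec_decrement[OF k, of "Suc j"] j by (simp add: k1_def)
  then have k2: "k2 \<in> Avec w"
    using Avec_increment[of k1 w j] j by (simp add: k2_def)
  have k2_eq: "k2 = k(j := k j + 1, Suc j := k (Suc j) - 1)"
    by (auto simp: k1_def k2_def)
  have dec_Suc_j: "of_int (k (Suc j)) * ?P (Suc w) k = 1 / real (Suc j) * ?P (Suc w) k1"
    using partition_term_decrement[of "Suc j" "Suc w" k] j \<open>1 \<le> k (Suc j)\<close>
    by (simp add: k1_def)
  have dec_j: "of_int (k j + 1) * ?P (Suc w) k2 = 1 / real j * ?P (Suc w) k1"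
    using partition_term_decrement[of j "Suc w" k2] j Avec_nonneg[OF k, of j]
    by (simp add: k1_def k2_def fun_upd_twist)
  have "real_of_int (ccoef w k2) = fact w * ?P (Suc w) k2"
    using IH[OF k2] partition_term_extend[OF k2, of "Suc w"] by simp
  then have "real_of_int (int j * (k j + 1) * ccoef w k2) = fact w * real j * (of_int (k j + 1) * ?P (Suc w) k2)"
    by (simp only: of_int_mult of_int_of_nat_eq ac_simps)
  also have "\<dots> = fact w * ?P (Suc w) k1"
    unfolding dec_j using j by simp
  also have "\<dots> = fact w * real (Suc j) * (1 / real (Suc j) * ?P (Suc w) k1)"
    by (simp del: of_nat_Suc)
  finally show ?thesis
    by (simp only: k2_eq dec_Suc_j[symmetric] ac_simps)
qed

lemma weight_split: "(\<Sum>i=1..Suc w. int i * k i) = k 1 + (\<Sum>j=1..w. int (Suc j) * k (Suc j))"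
proof -
  have "(\<Sum>i=1..Suc w. int i * k i) = int 1 * k 1 + (\<Sum>i=Suc 1..Suc w. int i * k i)"
    by (subst sum.atLeast_Suc_atMost) auto
  then show ?thesis
    by (simp only: sum.shift_bounds_cl_Suc_ivl)
qed

lemma Avec_Suc_weight:
  assumes "k \<in> Avec (Suc w)"
  shows "k 1 + (\<Sum>j=1..w. int (Suc j) * k (Suc j)) = int (Suc w)"
proof -
  have "(\<Sum>i=1..Suc w. int i * k i) = int (Suc w)"
    using assms by (simp add: Avec_def)
  then show ?thesis
    unfolding weight_split .
qed

lemma Avec_Suc_nontrivial:
  assumes "k \<in> Avec (Suc w)"
  shows "\<not> ((\<forall>i\<ge>1. k i = 0) \<or> (\<exists>i\<ge>1. k i < 0))"
proof
  assume "(\<forall>i\<ge>1. k i = 0) \<or> (\<exists>i\<ge>1. k i < 0)"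
  then have "\<forall>i\<ge>1. k i = 0"
    using Avec_nonneg[OF assms] by (meson not_less)
  then show False
    using assms by (simp add: Avec_def)
qed

lemma ccoef_single_part:
  assumes k: "k \<in> Avec (Suc w)" and "1 \<le> k 1" and "\<forall>i\<ge>2. k i = 0"
  shows "real_of_int (ccoef (Suc w) k) = fact (Suc w) * partition_term (\<lambda>i. 1 / real i) (Suc w) k"
proof -
  have "(\<Sum>j=1..w. int (Suc j) * k (Suc j)) = 0"
    using assms(3) by simp
  then have "nat (k 1) = Suc w"
    using Avec_Suc_weight[OF k] by simp
  moreover have "partition_term (\<lambda>i. 1 / real i) (Suc w) k
      = (\<Prod>i\<in>{1}. (1 / real i) ^ nat (k i) / fact (nat (k i)))"
    unfolding partition_term_def using assms(3) by (intro prod.mono_neutral_right) auto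
  ultimately show ?thesis
    using assms Avec_Suc_nontrivial[OF k] by simp
qed

lemma ccoef_Suc_recursion:
  assumes IH: "\<And>k'. k' \<in> Avec w \<Longrightarrow>
      real_of_int (ccoef w k') = fact w * partition_term (\<lambda>i. 1 / real i) w k'"
    and k: "k \<in> Avec (Suc w)" and not_single: "\<not> (1 \<le> k 1 \<and> (\<forall>i\<ge>2. k i = 0))"
  shows "real_of_int (ccoef (Suc w) k) = fact (Suc w) * partition_term (\<lambda>i. 1 / real i) (Suc w) k"
proof -
  let ?P = "partition_term (\<lambda>i. 1 / real i) (Suc w) k"
  have "real_of_int (ccoef (Suc w) k)
      = real_of_int (ccoef w (k(1 := k 1 - 1)))
        + (\<Sum>j=1..w. real_of_int (int j * (k j + 1) * ccoef w (k(j := k j + 1, Suc j := k (Suc j) - 1))))"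
    using Avec_Suc_nontrivial[OF k] not_single by (simp only: ccoef.simps if_False of_int_add of_int_sum)
  also have "\<dots> = fact w * of_int (k 1) * ?P + (\<Sum>j=1..w. fact w * real (Suc j) * of_int (k (Suc j)) * ?P)"
    using ccoef_first_term[OF IH k] ccoef_shift_term[OF IH k]
    by (intro arg_cong2[where f="(+)"] sum.cong) auto
  also have "\<dots> = fact w * ?P * real_of_int (k 1 + (\<Sum>j=1..w. int (Suc j) * k (Suc j)))"
    by (simp add: sum_distrib_left sum_distrib_right of_int_sum distrib_left mult_ac)
  also have "\<dots> = fact (Suc w) * ?P"
    unfolding Avec_Suc_weight[OF k] by (simp add: mult_ac)
  finally show ?thesis .
qed

text \<open>That is, ccoef w k is the number of permutations of w points with k i cycles of length i.\<close>
lemma ccoef_eq_partition_term: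
  "k \<in> Avec w \<Longrightarrow> 1 \<le> w \<Longrightarrow> real_of_int (ccoef w k) = fact w * partition_term (\<lambda>i. 1 / real i) w k"
proof (induction w arbitrary: k)
  case (Suc w)
  show ?case
  proof (cases "1 \<le> k 1 \<and> (\<forall>i\<ge>2. k i = 0)")
    case True
    then show ?thesis
      using Suc.prems(1) by (intro ccoef_single_part) auto
  next
    case False
    have "1 \<le> w"
    proof (rule ccontr)
      assume "\<not> 1 \<le> w"
      then have "w = 0"
        by simp
      then have "k 1 = 1" "\<forall>i\<ge>2. k i = 0"
        using Suc.prems(1) by (auto simp: Avec_def)
      with False show False
        by simp
    qed
    then show ?thesis
      using Suc False by (intro ccoef_Suc_recursion) auto
  qed
qed simp

lemma sum_ccoef_times_prod:
  assumes "1 \<le> m"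
  shows "(\<Sum>k\<in>Avec m. real_of_int (ccoef m k) * (\<Prod>i=1..m. a i ^ nat (k i)))
       = fact m * partition_sum (\<lambda>i. a i / real i) m"
proof -
  have "partition_term (\<lambda>i. a i / real i) m k
      = partition_term (\<lambda>i. 1 / real i) m k * (\<Prod>i=1..m. a i ^ nat (k i))" for k
    using partition_term_mult[of "\<lambda>i. 1 / real i" a m k] by simp
  then show ?thesis
    unfolding partition_sum_def sum_distrib_left using assms
    by (intro sum.cong refl) (simp add: ccoef_eq_partition_term)
qed

section \<open>The coefficients of G_n\<close>

definition yule_coeff :: "nat \<Rightarrow> nat \<Rightarrow> real" where
  "yule_coeff n i = Hnr n i - (if odd i then 2 else 0)"

lemma fps_deriv_yule_fps: "fps_deriv (yule_fps n) = Abs_fps (\<lambda>k. yule_coeff n (k + 1)) * yule_fps n"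
proof -
  have "fps_deriv (1 - fps_X :: real fps) = - geometric_fps 1 * (1 - fps_X)"
    using geometric_fps_times_one_minus[of "1 :: real"] by simp
  moreover have "fps_deriv (geometric_prod n)
      = (\<Sum>j\<in>{1..n}. fps_const (1 / real j) * geometric_fps (1 / real j)) * geometric_prod n"
    unfolding geometric_prod_def by (intro fps_deriv_prod_of_logarithmic fps_deriv_geometric_fps)
  ultimately have "fps_deriv (yule_fps n) = (- geometric_fps 1 + fps_const (-1) * geometric_fps (-1)
      + (\<Sum>j\<in>{1..n}. fps_const (1 / real j) * geometric_fps (1 / real j))) * yule_fps n"
    unfolding yule_fps_def by (intro fps_deriv_mult_of_logarithmic fps_deriv_geometric_fps)
  also have "- geometric_fps 1 + fps_const (-1) * geometric_fps (-1)
      + (\<Sum>j\<in>{1..n}. fps_const (1 / real j) * geometric_fps (1 / real j)) = Abs_fps (\<lambda>k. yule_coeff n (k + 1))"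
  proof (rule fps_ext)
    fix k
    have "fps_nth (\<Sum>j\<in>{1..n}. fps_const (1 / real j) * geometric_fps (1 / real j)) k = Hnr n (k + 1)"
      by (simp add: fps_sum_nth Hnr_def geometric_fps_def power_one_over)
    then show "fps_nth (- geometric_fps 1 + fps_const (-1) * geometric_fps (-1)
        + (\<Sum>j\<in>{1..n}. fps_const (1 / real j) * geometric_fps (1 / real j))) k
        = fps_nth (Abs_fps (\<lambda>k. yule_coeff n (k + 1))) k"
      by (cases "even k") (simp_all add: geometric_fps_def yule_coeff_def)
  qed
  finally show ?thesis .
qed

lemma fps_nth_yule_fps_0: "fps_nth (yule_fps n) 0 = 1"
proof -
  have "fps_nth (geometric_prod n) 0 = 1"
    unfolding geometric_prod_def
    by (induction n) (simp_all add: geometric_fps_def atLeastAtMostSuc_conv fps_mult_nth)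
  then show ?thesis
    by (simp add: yule_fps_def fps_mult_nth geometric_fps_def)
qed

lemma yule_fps_nth_rec:
  "1 \<le> m \<Longrightarrow> real m * fps_nth (yule_fps n) m = (\<Sum>i=1..m. yule_coeff n i * fps_nth (yule_fps n) (m - i))"
  using fps_nth_of_deriv_eq_mult[OF fps_deriv_yule_fps] by simp

lemma fps_nth_yule_fps: "fps_nth (yule_fps n) m = partition_sum (\<lambda>i. yule_coeff n i / real i) m"
  by (rule partition_sum_unique) (simp_all add: fps_nth_yule_fps_0 yule_fps_nth_rec)

lemma prod_even_odd_eq_prod_yule_coeff:
  "(\<Prod>i\<in>{i\<in>{1..m}. even i}. Hnr n i ^ e i) * (\<Prod>i\<in>{i\<in>{1..m}. odd i}. (Hnr n i - 2) ^ e i)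
     = (\<Prod>i=1..m. yule_coeff n i ^ e i)"
proof -
  have "{1..m} = {i\<in>{1..m}. even i} \<union> {i\<in>{1..m}. odd i}"
    by auto
  then have "(\<Prod>i=1..m. yule_coeff n i ^ e i)
      = (\<Prod>i\<in>{i\<in>{1..m}. even i}. yule_coeff n i ^ e i) * (\<Prod>i\<in>{i\<in>{1..m}. odd i}. yule_coeff n i ^ e i)"
    by (metis (no_types, lifting) finite_atLeastAtMost finite_Un prod.union_disjoint disjoint_iff
        mem_Collect_eq)
  then show ?thesis
    by (simp add: yule_coeff_def)
qed

theorem theoremY4p2:
  fixes n m :: nat
  assumes "n \<ge> 2" and "m \<ge> 1"
  shows "tau_moment n m =
           (-1) ^ (m + 1) * 2 * fact m / (real n - 1)
           + (real n + 1) / (real n - 1) *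
             (\<Sum>k\<in>Avec m. real_of_int (ccoef m k)
                * (\<Prod>i\<in>{i\<in>{1..m}. even i}. Hnr n i ^ nat (k i))
                * (\<Prod>i\<in>{i\<in>{1..m}. odd i}. (Hnr n i - 2) ^ nat (k i)))
         \<and> tau_moment n 1 = (real n + 1) / (real n - 1) * Hnr n 1 - 2 * real n / (real n - 1)
         \<and> tau_moment n 2 =
           (real n + 1) / (real n - 1) * ((Hnr n 1 - 2)^2 + Hnr n 2) - 4 / (real n - 1)"
proof (intro conjI)
  have "(\<Sum>k\<in>Avec m. real_of_int (ccoef m k)
                * (\<Prod>i\<in>{i\<in>{1..m}. even i}. Hnr n i ^ nat (k i))
                * (\<Prod>i\<in>{i\<in>{1..m}. odd i}. (Hnr n i - 2) ^ nat (k i)))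
      = (\<Sum>k\<in>Avec m. real_of_int (ccoef m k) * (\<Prod>i=1..m. yule_coeff n i ^ nat (k i)))"
    by (simp only: mult.assoc prod_even_odd_eq_prod_yule_coeff)
  also have "\<dots> = fact m * fps_nth (yule_fps n) m"
    unfolding sum_ccoef_times_prod[OF assms(2)] fps_nth_yule_fps ..
  finally show "tau_moment n m = (-1) ^ (m + 1) * 2 * fact m / (real n - 1)
           + (real n + 1) / (real n - 1) *
             (\<Sum>k\<in>Avec m. real_of_int (ccoef m k)
                * (\<Prod>i\<in>{i\<in>{1..m}. even i}. Hnr n i ^ nat (k i))
                * (\<Prod>i\<in>{i\<in>{1..m}. odd i}. (Hnr n i - 2) ^ nat (k i)))"
    by (simp add: tau_moment_eq_yule_fps[OF assms(1)])
  have g1: "fps_nth (yule_fps n) 1 = Hnr n 1 - 2"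
    using yule_fps_nth_rec[of 1 n] by (simp add: fps_nth_yule_fps_0 yule_coeff_def)
  have "real 2 * fps_nth (yule_fps n) 2 = (\<Sum>i=1..2. yule_coeff n i * fps_nth (yule_fps n) (2 - i))"
    by (rule yule_fps_nth_rec) simp
  also have "\<dots> = yule_coeff n 1 * fps_nth (yule_fps n) 1 + yule_coeff n 2 * fps_nth (yule_fps n) 0"
    by (simp add: numeral_2_eq_2)
  finally have g2: "2 * fps_nth (yule_fps n) 2 = (Hnr n 1 - 2)^2 + Hnr n 2"
    by (simp add: g1 fps_nth_yule_fps_0 yule_coeff_def power2_eq_square flip: One_nat_def)
  have "real n - 1 \<noteq> 0"
    using assms(1) by simp
  moreover have "tau_moment n 1 = 2 / (real n - 1) + (real n + 1) / (real n - 1) * (Hnr n 1 - 2)"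
    using tau_moment_eq_yule_fps[OF assms(1), of 1] unfolding g1 by simp
  ultimately show "tau_moment n 1 = (real n + 1) / (real n - 1) * Hnr n 1 - 2 * real n / (real n - 1)"
    by (simp add: field_simps)
  have "fact 2 = (2 :: real)"
    by (simp add: numeral_2_eq_2)
  then have "tau_moment n 2 = - 4 / (real n - 1) + (real n + 1) / (real n - 1) * (2 * fps_nth (yule_fps n) 2)"
    using tau_moment_eq_yule_fps[OF assms(1), of 2] by simp
  then show "tau_moment n 2 = (real n + 1) / (real n - 1) * ((Hnr n 1 - 2)^2 + Hnr n 2) - 4 / (real n - 1)"
    unfolding g2 by simp
qed

end
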